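(* Let $(b,c)$ be a locally finite connected weighted graph over $X$ such that $\sup_{x,y\in X}d(x,y)<\infty$. Then $X$ is totally bounded with respect to every metric $\sigma$ on $X$ which is intrinsic with respect to some measure $m$ on $X$ with $m(X)<\infty$.
   Context: Let $X$ be a countably infinite set. A weighted graph $(b,c)$ over $X$ consists of a symmetric $b:X\times X\to[0,\infty)$ with $b(x,x)=0$ and $\sum_{y}b(x,y)<\infty$ for all $x$, and $c:X\to[0,\infty)$. It is locally finite if each $x$ has finitely many $y$ with $b(x,y)>0$. A path is a finite sequence $(x_0,\dots,x_n)$ of pairwise distinct vertices with $b(x_{i-1},x_i)>0$; connected means any two distinct vertices are joined by a path. Define $d(x,y)=\inf\{\sum_{i=1}^n 1/b(x_{i-1},x_i):(x_0,\dots,x_n)\text{ a path from }x\text{ to }y\}$, $d(x,x)=0$. A measure on $X$ is $m:X\to[0,\infty)$ with $m(A)=\sum_{x\in A}m(x)$. A metric $\sigma$ on $X$ is intrinsic with respect to $m$ if $\frac12\sum_{y}b(x,y)\sigma(x,y)^2\le m(x)$ for all $x$. *)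

theory Defs
  imports "HOL-Analysis.Analysis"
begin

definition weighted_graph :: "('x \<Rightarrow> 'x \<Rightarrow> real) \<Rightarrow> ('x \<Rightarrow> real) \<Rightarrow> bool" where
  "weighted_graph b c \<longleftrightarrow>
     (\<forall>x y. b x y = b y x) \<and> (\<forall>x y. 0 \<le> b x y) \<and> (\<forall>x. b x x = 0) \<and>
     (\<forall>x. (\<lambda>y. b x y) summable_on UNIV) \<and> (\<forall>x. 0 \<le> c x)"

definition locally_finite_graph :: "('x \<Rightarrow> 'x \<Rightarrow> real) \<Rightarrow> bool" where
  "locally_finite_graph b \<longleftrightarrow> (\<forall>x. finite {y. b x y > 0})"

definition is_path :: "('x \<Rightarrow> 'x \<Rightarrow> real) \<Rightarrow> 'x list \<Rightarrow> bool" where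
  "is_path b xs \<longleftrightarrow> xs \<noteq> [] \<and> distinct xs \<and>
     (\<forall>i. Suc i < length xs \<longrightarrow> b (xs ! i) (xs ! Suc i) > 0)"

definition path_from_to :: "('x \<Rightarrow> 'x \<Rightarrow> real) \<Rightarrow> 'x \<Rightarrow> 'x \<Rightarrow> 'x list \<Rightarrow> bool" where
  "path_from_to b x y xs \<longleftrightarrow> is_path b xs \<and> hd xs = x \<and> last xs = y"

definition connected_graph :: "('x \<Rightarrow> 'x \<Rightarrow> real) \<Rightarrow> bool" where
  "connected_graph b \<longleftrightarrow> (\<forall>x y. x \<noteq> y \<longrightarrow> (\<exists>xs. path_from_to b x y xs))"

definition path_length :: "('x \<Rightarrow> 'x \<Rightarrow> real) \<Rightarrow> 'x list \<Rightarrow> real" where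
  "path_length b xs = (\<Sum>i<length xs - 1. 1 / b (xs ! i) (xs ! Suc i))"

definition graph_dist :: "('x \<Rightarrow> 'x \<Rightarrow> real) \<Rightarrow> 'x \<Rightarrow> 'x \<Rightarrow> real" where
  "graph_dist b x y = (if x = y then 0 else Inf {path_length b xs | xs. path_from_to b x y xs})"

definition is_measure_on :: "('x \<Rightarrow> real) \<Rightarrow> bool" where
  "is_measure_on m \<longleftrightarrow> (\<forall>x. 0 \<le> m x)"

text \<open>m(X) < \<infinity> for a nonnegative m means summability over the whole vertex set.\<close>
definition finite_total_mass :: "('x \<Rightarrow> real) \<Rightarrow> bool" where
  "finite_total_mass m \<longleftrightarrow> m summable_on UNIV"

definition is_metric :: "('x \<Rightarrow> 'x \<Rightarrow> real) \<Rightarrow> bool" where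
  "is_metric \<sigma> \<longleftrightarrow> (\<forall>x y. \<sigma> x y = 0 \<longleftrightarrow> x = y) \<and> (\<forall>x y. \<sigma> x y = \<sigma> y x) \<and>
     (\<forall>x y z. \<sigma> x z \<le> \<sigma> x y + \<sigma> y z)"

definition intrinsic :: "('x \<Rightarrow> 'x \<Rightarrow> real) \<Rightarrow> ('x \<Rightarrow> real) \<Rightarrow> ('x \<Rightarrow> 'x \<Rightarrow> real) \<Rightarrow> bool" where
  "intrinsic b m \<sigma> \<longleftrightarrow> (\<forall>x. (\<lambda>y. b x y * (\<sigma> x y)^2) summable_on UNIV \<and>
       (1/2) * (\<Sum>\<^sub>\<infinity>y. b x y * (\<sigma> x y)^2) \<le> m x)"

definition totally_bounded_wrt :: "('x \<Rightarrow> 'x \<Rightarrow> real) \<Rightarrow> bool" where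
  "totally_bounded_wrt \<sigma> \<longleftrightarrow> (\<forall>e>0. \<exists>F. finite F \<and> (\<forall>x. \<exists>y\<in>F. \<sigma> x y < e))"

end

theory Submission
  imports Defs
begin

text \<open>Fix a vertex v and \<epsilon> > 0, and let K be a finite set off which m has mass at most \<delta>.
  From any vertex x follow a path to v of d-length less than C' and stop at the first vertex y
  of F = {v} \<union> K. Along each edge \<sigma> \<le> t/(2b) + b \<sigma>^2/(2t); summed, the first terms contribute
  less than t C'/2, and by intrinsicness (b(u,w) \<sigma>(u,w)^2 \<le> 2 m(u)) the second ones at most
  the m-mass of the distinct vertices visited before y, which lie outside K, divided by t.
  With t = \<epsilon>/C' and \<delta> = t \<epsilon>/4 this gives \<sigma>(x,y) < \<epsilon>, so F is a finite \<epsilon>-net.\<close>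

lemma is_metric_le_sum_nth:
  assumes "is_metric \<sigma>"
  shows "\<sigma> (xs ! 0) (xs ! j) \<le> (\<Sum>i<j. \<sigma> (xs ! i) (xs ! Suc i))"
proof (induction j)
  case 0
  have "\<sigma> (xs ! 0) (xs ! 0) = 0" using assms unfolding is_metric_def by blast
  then show ?case by simp
next
  case (Suc j)
  have "\<sigma> (xs ! 0) (xs ! Suc j) \<le> \<sigma> (xs ! 0) (xs ! j) + \<sigma> (xs ! j) (xs ! Suc j)"
    using assms unfolding is_metric_def by blast
  then show ?case using Suc.IH by simp
qed

lemma intrinsic_edge_bound:
  assumes "intrinsic b m \<sigma>" "\<And>y. 0 \<le> b x y"
  shows "b x y * (\<sigma> x y)\<^sup>2 \<le> 2 * m x"
proof -
  have summable: "(\<lambda>y. b x y * (\<sigma> x y)\<^sup>2) summable_on UNIV"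
    and le: "(1/2) * (\<Sum>\<^sub>\<infinity>y. b x y * (\<sigma> x y)\<^sup>2) \<le> m x"
    using assms(1) unfolding intrinsic_def by blast+
  have "(\<Sum>z\<in>{y}. b x z * (\<sigma> x z)\<^sup>2) \<le> (\<Sum>\<^sub>\<infinity>z. b x z * (\<sigma> x z)\<^sup>2)"
    by (rule finite_sum_le_infsum[OF summable]) (use assms(2) in auto)
  then show ?thesis using le by simp
qed

lemma nonneg_summable_small_off_finite:
  fixes m :: "'a \<Rightarrow> real"
  assumes "m summable_on UNIV" "\<And>x. 0 \<le> m x" "\<delta> > 0"
  obtains K where "finite K" "\<And>A. finite A \<Longrightarrow> A \<inter> K = {} \<Longrightarrow> sum m A \<le> \<delta>"
proof -
  obtain K where K: "finite K" "dist (sum m K) (infsum m UNIV) \<le> \<delta>"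
    using infsum_finite_approximation[OF assms(1,3)] by blast
  have "sum m A \<le> \<delta>" if A: "finite A" "A \<inter> K = {}" for A
  proof -
    have "sum m A + sum m K = sum m (A \<union> K)"
      using A K(1) by (simp add: sum.union_disjoint)
    also have "\<dots> \<le> infsum m UNIV"
      by (rule finite_sum_le_infsum[OF assms(1)]) (use A K(1) assms(2) in auto)
    finally show ?thesis
      using K(2) by (simp add: dist_real_def abs_le_iff)
  qed
  with K(1) show ?thesis by (rule that)
qed

lemma le_weighted_am_gm:
  fixes w r t :: real
  assumes "w > 0" "t > 0"
  shows "r \<le> t / (2 * w) + w * r\<^sup>2 / (2 * t)"
proof -
  have "t / (2 * w) + w * r\<^sup>2 / (2 * t) - r = (w * r - t)\<^sup>2 / (2 * w * t)"
    using assms by (simp add: field_simps power2_eq_square)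
  moreover have "(w * r - t)\<^sup>2 / (2 * w * t) \<ge> 0" using assms by simp
  ultimately show ?thesis by linarith
qed

lemma graph_dist_less_obtains_path:
  assumes "connected_graph b" "x \<noteq> y" "graph_dist b x y < r"
  obtains xs where "path_from_to b x y xs" "path_length b xs < r"
proof -
  have "{path_length b xs | xs. path_from_to b x y xs} \<noteq> {}"
    using assms(1,2) unfolding connected_graph_def by blast
  from cInf_lessD[OF this] assms(2,3) show ?thesis
    using that unfolding graph_dist_def by auto
qed

lemma is_metric_along_path_le:
  assumes "is_metric \<sigma>" "is_path b xs" "j < length xs" "t > 0"
    and "\<And>x y. 0 \<le> b x y" "\<And>x y. b x y * (\<sigma> x y)\<^sup>2 \<le> 2 * m x"
  shows "\<sigma> (xs ! 0) (xs ! j) \<le> t / 2 * path_length b xs + sum m (set (take j xs)) / t"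
proof -
  let ?b = "\<lambda>i. b (xs ! i) (xs ! Suc i)" and ?\<sigma> = "\<lambda>i. \<sigma> (xs ! i) (xs ! Suc i)"
  have pos: "?b i > 0" if "i < j" for i
    using assms(2,3) that unfolding is_path_def by auto
  have "\<sigma> (xs ! 0) (xs ! j) \<le> (\<Sum>i<j. ?\<sigma> i)"
    by (rule is_metric_le_sum_nth[OF assms(1)])
  also have "\<dots> \<le> (\<Sum>i<j. t / 2 * (1 / ?b i) + ?b i * (?\<sigma> i)\<^sup>2 / (2 * t))"
    using le_weighted_am_gm[OF pos assms(4)] by (intro sum_mono) simp
  also have "\<dots> = t / 2 * (\<Sum>i<j. 1 / ?b i) + (\<Sum>i<j. ?b i * (?\<sigma> i)\<^sup>2) / (2 * t)"
    by (simp add: sum.distrib sum_distrib_left sum_divide_distrib)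
  also have "\<dots> \<le> t / 2 * path_length b xs + (\<Sum>i<j. 2 * m (xs ! i)) / (2 * t)"
  proof (intro add_mono mult_left_mono divide_right_mono sum_mono)
    show "(\<Sum>i<j. 1 / ?b i) \<le> path_length b xs"
      unfolding path_length_def by (rule sum_mono2) (use assms(3,5) in auto)
  qed (use assms(4,6) in auto)
  also have "(\<Sum>i<j. 2 * m (xs ! i)) / (2 * t) = sum m (set (take j xs)) / t"
  proof -
    have "sum m (set (take j xs)) = sum_list (map m (take j xs))"
      using assms(2) by (simp add: is_path_def sum.distinct_set_conv_list)
    also have "\<dots> = (\<Sum>i<j. m (xs ! i))"
      using assms(3) by (simp add: sum_list_sum_nth lessThan_atLeast0)
    finally show ?thesis by (simp flip: sum_distrib_left)
  qed
  finally show ?thesis .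
qed

lemma path_reaches_set_close:
  assumes "is_metric \<sigma>" "path_from_to b x v xs" "v \<in> F" "t > 0"
    and "\<And>x y. 0 \<le> b x y" "\<And>x y. b x y * (\<sigma> x y)\<^sup>2 \<le> 2 * m x"
  shows "\<exists>y\<in>F. \<exists>A. finite A \<and> A \<inter> F = {} \<and>
           \<sigma> x y \<le> t / 2 * path_length b xs + sum m A / t"
proof -
  have path: "is_path b xs" and ne: "xs \<noteq> []" and x: "xs ! 0 = x" and v: "xs ! (length xs - 1) = v"
    using assms(2) by (auto simp: path_from_to_def is_path_def hd_conv_nth last_conv_nth)
  define j where "j = (LEAST j. xs ! j \<in> F)"
  have hit: "xs ! j \<in> F" and "j \<le> length xs - 1"
    unfolding j_def using v assms(3) by (auto intro: LeastI Least_le)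
  then have "j < length xs" using ne by (cases xs) auto
  have "xs ! i \<notin> F" if "i < j" for i
    using that unfolding j_def by (rule not_less_Least)
  then have "set (take j xs) \<inter> F = {}"
    by (auto simp: in_set_conv_nth)
  with hit is_metric_along_path_le[OF assms(1) path \<open>j < length xs\<close> assms(4-6)] x
  show ?thesis by blast
qed

lemma totally_bounded_if_graph_dist_bounded:
  assumes "is_metric \<sigma>" "connected_graph b" "\<And>x y. graph_dist b x y \<le> C"
    and "\<And>x y. 0 \<le> b x y" "\<And>x y. b x y * (\<sigma> x y)\<^sup>2 \<le> 2 * m x"
    and "m summable_on UNIV" "\<And>x. 0 \<le> m x"
  shows "totally_bounded_wrt \<sigma>"
  unfolding totally_bounded_wrt_def
proof (intro allI impI)
  fix e :: real assume "e > 0"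
  define C' where "C' = \<bar>C\<bar> + 1"
  define t where "t = e / C'"
  define \<delta> where "\<delta> = t * e / 4"
  have "C' > 0" "C < C'" by (auto simp: C'_def)
  with \<open>e > 0\<close> have "t > 0" "\<delta> > 0" by (auto simp: t_def \<delta>_def)
  obtain K where K: "finite K" "\<And>A. finite A \<Longrightarrow> A \<inter> K = {} \<Longrightarrow> sum m A \<le> \<delta>"
    using nonneg_summable_small_off_finite[OF assms(6,7) \<open>\<delta> > 0\<close>] by blast
  fix v :: 'a
  have "\<exists>y\<in>insert v K. \<sigma> x y < e" for x
  proof (cases "x = v")
    case True
    have "\<sigma> x x = 0" using assms(1) unfolding is_metric_def by blast
    with True \<open>e > 0\<close> show ?thesis by auto
  next
    case False
    obtain xs where xs: "path_from_to b x v xs" "path_length b xs < C'"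
      using graph_dist_less_obtains_path[OF assms(2) False] assms(3) \<open>C < C'\<close> order.strict_trans1
      by blast
    obtain y A where y: "y \<in> insert v K" "finite A" "A \<inter> insert v K = {}"
      and close: "\<sigma> x y \<le> t / 2 * path_length b xs + sum m A / t"
      using path_reaches_set_close[OF assms(1) xs(1) _ \<open>t > 0\<close> assms(4,5)] by blast
    have "t / 2 * path_length b xs + sum m A / t \<le> t / 2 * C' + \<delta> / t"
      using xs(2) K(2)[of A] y(2,3) \<open>t > 0\<close>
      by (intro add_mono mult_left_mono divide_right_mono) auto
    also have "\<dots> = 3 / 4 * e"
      using \<open>C' > 0\<close> \<open>t > 0\<close> by (simp add: t_def \<delta>_def field_simps)
    finally have "\<sigma> x y < e" using close \<open>e > 0\<close> by linarith
    with y(1) show ?thesis by blast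
  qed
  moreover have "finite (insert v K)" using K(1) by simp
  ultimately show "\<exists>F. finite F \<and> (\<forall>x. \<exists>y\<in>F. \<sigma> x y < e)" by blast
qed

theorem mainTheorem6:
  fixes b :: "'x \<Rightarrow> 'x \<Rightarrow> real" and c :: "'x \<Rightarrow> real"
  assumes "countable (UNIV :: 'x set)" and "infinite (UNIV :: 'x set)"
    and "weighted_graph b c" and "locally_finite_graph b" and "connected_graph b"
    and "\<exists>C. \<forall>x y. graph_dist b x y \<le> C"
  shows "\<forall>\<sigma> m. is_metric \<sigma> \<and> is_measure_on m \<and> finite_total_mass m \<and> intrinsic b m \<sigma>
           \<longrightarrow> totally_bounded_wrt \<sigma>"
proof (intro allI impI)
  fix \<sigma> m :: "'x \<Rightarrow> _"
  assume "is_metric \<sigma> \<and> is_measure_on m \<and> finite_total_mass m \<and> intrinsic b m \<sigma>"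
  then have \<sigma>: "is_metric \<sigma>" "intrinsic b m \<sigma>"
    and m: "m summable_on UNIV" "\<And>x. 0 \<le> m x"
    by (auto simp: is_measure_on_def finite_total_mass_def)
  have b: "\<And>x y. 0 \<le> b x y" using assms(3) by (simp add: weighted_graph_def)
  obtain C where "\<And>x y. graph_dist b x y \<le> C" using assms(6) by blast
  from totally_bounded_if_graph_dist_bounded[OF \<sigma>(1) assms(5) this b
      intrinsic_edge_bound[OF \<sigma>(2) b] m]
  show "totally_bounded_wrt \<sigma>" .
qed

end
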